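(* Let $D$ be a delta-matroid on $[n,\overline{n}]$. Let $A,B\subseteq[n]$ be disjoint, and let $S\in\operatorname{AdS}_n$ be disjoint from $A\cup B\cup\overline{A}\cup\overline{B}$. Then $$g_{D/A\setminus B}(S)=g_D(S\cup A\cup\overline{B})-g_D(A\cup\overline{B}).$$
   Context: For a finite $E\subseteq\{1,2,\dots\}$ let $E\cup\overline{E}$ consist of $E$ and formal copies $\overline{i}$ ($i\in E$), with involution $a\mapsto\overline{a}$; $\overline{S}=\{\overline{a}:a\in S\}$; $[n,\overline{n}]$ is the case $E=[n]$. A subset is admissible if it contains at most one of $i,\overline{i}$ for each $i$; $\operatorname{AdS}_n$ is the set of admissible subsets of $[n,\overline{n}]$. In $\mathbb{R}^E$ set $e_{\overline{i}}=-e_i$, $e_S=\sum_{a\in S}e_a$. A delta-matroid on $E\cup\overline{E}$ is a nonempty collection $\mathcal{F}$ of admissible sets of size $|E|$ (feasible sets) such that $\operatorname{Conv}\{e_B:B\in\mathcal{F}\}$ has all edges parallel to some $e_i$ or $e_i\pm e_j$. Its rank function is $g_D(S)=\max_{B\in\mathcal{F}}(|S\cap B|-|\overline{S}\cap B|)$ for admissible $S$. For $i\in E$: $i$ is a loop if no feasible set contains $i$, and a coloop if every feasible set contains $i$. If $i$ is not a loop, the contraction $D/i$ (on $(E\setminus\{i\})\cup\overline{(E\setminus\{i\})}$) has feasible sets $B\setminus\{i\}$ for feasible $B\ni i$; if $i$ is not a coloop, the deletion $D\setminus i$ has feasible sets $B\setminus\{\overline{i}\}$ for feasible $B\ni\overline{i}$;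 the projection $D(i)$ has feasible sets $B\setminus\{i,\overline{i}\}$ for all feasible $B$; if $i$ is a loop or a coloop, $D/i=D\setminus i=D(i)$. For $A\subseteq E$, $D/A$ and $D\setminus A$ are obtained by successively contracting, resp. deleting, all elements of $A$ (the result does not depend on the order); for disjoint $A,B$, $D/A\setminus B$ is obtained by contracting $A$ and then deleting $B$ (same as deleting $B$ then contracting $A$). *)

theory Defs
  imports "HOL-Analysis.Analysis"
begin

text \<open>Signed elements: Pl i is the element i of E, Br i is its formal copy (i-bar).
  The ground set E is an arbitrary subset of a finite type 'a (so that the
  vectors e_S live in the Euclidean space real^'a; coordinates outside E are 0).\<close>

datatype 'a selt = Pl 'a | Br 'a

fun bar :: "'a selt \<Rightarrow> 'a selt" where
  "bar (Pl i) = Br i"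
| "bar (Br i) = Pl i"

definition ground :: "'a set \<Rightarrow> 'a selt set" where
  "ground E = Pl ` E \<union> Br ` E"

definition admissible :: "'a set \<Rightarrow> 'a selt set \<Rightarrow> bool" where
  "admissible E S \<longleftrightarrow> S \<subseteq> ground E \<and> (\<forall>i. \<not> (Pl i \<in> S \<and> Br i \<in> S))"

fun evec :: "'a selt \<Rightarrow> real ^ 'a::finite" where
  "evec (Pl i) = axis i 1"
| "evec (Br i) = - axis i 1"

definition eset :: "'a selt set \<Rightarrow> real ^ 'a::finite" where
  "eset S = (\<Sum>a\<in>S. evec a)"

definition edge_dirs :: "'a::finite set \<Rightarrow> (real ^ 'a) set" where
  "edge_dirs E = {axis i 1 | i. i \<in> E}
     \<union> {axis i 1 + axis j 1 | i j. i \<in> E \<and> j \<in> E \<and> i \<noteq> j}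
     \<union> {axis i 1 - axis j 1 | i j. i \<in> E \<and> j \<in> E \<and> i \<noteq> j}"

definition delta_matroid :: "'a::finite set \<Rightarrow> 'a selt set set \<Rightarrow> bool" where
  "delta_matroid E F \<longleftrightarrow>
     F \<noteq> {} \<and>
     (\<forall>B\<in>F. admissible E B \<and> card B = card E) \<and>
     (\<forall>Ed. Ed face_of convex hull (eset ` F) \<and> aff_dim Ed = 1 \<longrightarrow>
        (\<exists>v\<in>edge_dirs E. \<forall>x\<in>Ed. \<forall>y\<in>Ed. \<exists>c::real. y - x = c *\<^sub>R v))"

definition rank_fn :: "'a selt set set \<Rightarrow> 'a selt set \<Rightarrow> int" where
  "rank_fn F S = Max ((\<lambda>B. int (card (S \<inter> B)) - int (card (bar ` S \<inter> B))) ` F)"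

definition proj :: "'a selt set set \<Rightarrow> 'a \<Rightarrow> 'a selt set set" where
  "proj F i = (\<lambda>B. B - {Pl i, Br i}) ` F"

definition contract1 :: "'a selt set set \<Rightarrow> 'a \<Rightarrow> 'a selt set set" where
  "contract1 F i = (if \<exists>B\<in>F. Pl i \<in> B
      then (\<lambda>B. B - {Pl i}) ` {B \<in> F. Pl i \<in> B} else proj F i)"

definition delete1 :: "'a selt set set \<Rightarrow> 'a \<Rightarrow> 'a selt set set" where
  "delete1 F i = (if \<exists>B\<in>F. Br i \<in> B
      then (\<lambda>B. B - {Br i}) ` {B \<in> F. Br i \<in> B} else proj F i)"

text \<open>D/A and D\A: successive contraction / deletion of the elements of A, in some
  (arbitrary, fixed) order; the result is order independent.\<close>
definition contract :: "'a selt set set \<Rightarrow> 'a set \<Rightarrow> 'a selt set set" where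
  "contract F A = foldl contract1 F (SOME xs. set xs = A \<and> distinct xs)"

definition delete :: "'a selt set set \<Rightarrow> 'a set \<Rightarrow> 'a selt set set" where
  "delete F A = foldl delete1 F (SOME xs. set xs = A \<and> distinct xs)"

end

theory Submission
  imports Defs
begin

text \<open>A feasible set is a transversal of the pairs {i, bar i}, i.e. a sign vector in {1, -1}^E,
  and g_D(S) is the maximum over F of the linear objective with weight vector e_S. Contracting
  (deleting) i restricts F to its face maximizing (minimizing) the i-th coordinate and then
  forgets i. The edge condition says that an objective with exactly two maximizers on F has them
  differ in at most two coordinates; this passes to faces, and a perturbation argument turns it
  into a local optimality criterion: a non-optimal point has a better one differing from it in at
  most two coordinates. So if s vanishes at i and |s| \<le> 1, a maximizer y of s on the face of
  \<plusminus>e_i also maximizes s \<plusminus> e_i on F: a better point off the face flips i, losing 2, and at most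
  one further coordinate, gaining at most 2 for s. Hence the maximum of s on the face is
  max_F (s \<plusminus> e_i) - max_F (\<plusminus>e_i), and induction over the elements of A and B gives the formula.\<close>

section \<open>Transversals and linear objectives\<close>

fun index :: "'a selt \<Rightarrow> 'a" where
  "index (Pl i) = i"
| "index (Br i) = i"

lemma index_bar [simp]: "index (bar a) = index a"
  by (cases a) auto

lemma mem_ground_iff: "a \<in> ground R \<longleftrightarrow> index a \<in> R"
  by (cases a) (auto simp: ground_def)

lemma ground_insert: "ground (insert i R) = insert (Pl i) (insert (Br i) (ground R))"
  by (auto simp: ground_def)

lemma ground_insert_index: "ground (insert (index a) R) = insert a (insert (bar a) (ground R))"
  by (cases a) (auto simp: ground_def)

lemma inj_on_index_admissible: "admissible E S \<Longrightarrow> inj_on index S"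
proof (rule inj_onI)
  fix x y
  assume "admissible E S" "x \<in> S" "y \<in> S" "index x = index y"
  then show "x = y"
    by (cases x; cases y) (auto simp: admissible_def)
qed

lemma index_image_memI: "Pl j \<in> S \<Longrightarrow> j \<in> index ` S" "Br j \<in> S \<Longrightarrow> j \<in> index ` S"
  by (force intro: rev_image_eqI)+

definition transversal :: "'a set \<Rightarrow> 'a selt set \<Rightarrow> bool" where
  "transversal E B \<longleftrightarrow> B \<subseteq> ground E \<and> (\<forall>i\<in>E. Pl i \<in> B \<longleftrightarrow> Br i \<notin> B)"

lemma transversal_bar_iff: "transversal E B \<Longrightarrow> index a \<in> E \<Longrightarrow> bar a \<in> B \<longleftrightarrow> a \<notin> B"
  by (cases a) (auto simp: transversal_def)

lemma finite_transversals:
  assumes "finite E" and "\<forall>B\<in>M. transversal E B"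
  shows "finite M"
proof (rule finite_subset)
  show "M \<subseteq> Pow (ground E)"
    using assms(2) by (auto simp: transversal_def)
  show "finite (Pow (ground E))"
    using assms(1) by (simp add: ground_def)
qed

lemma transversal_if_feasible:
  assumes E: "finite E" and adm: "admissible E B" and card: "card B = card E"
  shows "transversal E B"
proof -
  have sub: "B \<subseteq> ground E"
    using adm by (simp add: admissible_def)
  have "index ` B \<subseteq> E"
    using sub by (auto simp: mem_ground_iff)
  moreover have "card (index ` B) = card E"
    using card_image[OF inj_on_index_admissible[OF adm]] card by simp
  ultimately have onto: "index ` B = E"
    using card_subset_eq[OF E] by blast
  have "Pl i \<in> B \<or> Br i \<in> B" if i: "i \<in> E" for i
  proof -
    obtain a where "a \<in> B" "index a = i"
      using i onto by blast
    then show ?thesis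
      by (cases a) auto
  qed
  then show ?thesis
    using sub adm by (auto simp: transversal_def admissible_def)
qed

lemma delta_matroid_transversal:
  fixes E :: "'a::finite set"
  assumes "delta_matroid E F" and "B \<in> F"
  shows "transversal E B"
  using assms transversal_if_feasible[of E B] by (simp add: delta_matroid_def)

definition signs :: "'a selt set \<Rightarrow> 'a \<Rightarrow> real" where
  "signs B i = (if Pl i \<in> B then 1 else -1)"

lemma signs_cases: "signs B i = 1 \<or> signs B i = -1"
  by (simp add: signs_def)

definition flips :: "'a set \<Rightarrow> 'a selt set \<Rightarrow> 'a selt set \<Rightarrow> 'a set" where
  "flips E u w = {j\<in>E. signs u j \<noteq> signs w j}"

lemma finite_flips: "finite E \<Longrightarrow> finite (flips E u w)"
  by (simp add: flips_def)

lemma transversal_eqI: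
  assumes "transversal E u" and "transversal E w" and "flips E u w = {}"
  shows "u = w"
proof (rule set_eqI)
  fix a
  have Pl_iff: "Pl i \<in> u \<longleftrightarrow> Pl i \<in> w" if "i \<in> E" for i
    using assms(3) that by (auto simp: flips_def signs_def split: if_splits)
  show "a \<in> u \<longleftrightarrow> a \<in> w"
  proof (cases "index a \<in> E")
    case True
    then show ?thesis
      using Pl_iff assms(1,2) by (cases a) (auto simp: transversal_def)
  next
    case False
    then show ?thesis
      using assms(1,2) by (auto simp: transversal_def mem_ground_iff)
  qed
qed

lemma flips_eq_imp_eq:
  assumes "transversal E u" and "transversal E z" and "transversal E w"
    and "flips E u z = flips E u w"
  shows "z = w"
proof (rule transversal_eqI[OF assms(2,3)])
  show "flips E z w = {}"
  proof (rule ccontr)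
    assume "flips E z w \<noteq> {}"
    then obtain j where "j \<in> E" "signs z j \<noteq> signs w j"
      by (auto simp: flips_def)
    then have "j \<in> flips E u z \<longleftrightarrow> j \<notin> flips E u w"
      using signs_cases[of u j] signs_cases[of z j] signs_cases[of w j] by (auto simp: flips_def)
    then show False
      using assms(4) by simp
  qed
qed

lemma index_mem_flips:
  assumes "transversal E u" and "transversal E w" and "index a \<in> E" and "a \<in> u" and "a \<notin> w"
  shows "index a \<in> flips E u w"
  using assms by (cases a) (auto simp: flips_def signs_def transversal_def)

definition objective :: "'a set \<Rightarrow> ('a \<Rightarrow> real) \<Rightarrow> 'a selt set \<Rightarrow> real" where
  "objective E c B = (\<Sum>j\<in>E. c j * signs B j)"

lemma objective_add: "objective E (\<lambda>j. a j + b j) B = objective E a B + objective E b B"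
  by (simp add: objective_def sum.distrib distrib_right)

lemma objective_mult: "objective E (\<lambda>j. k * c j) B = k * objective E c B"
  by (simp add: objective_def sum_distrib_left mult.assoc)

lemma objective_diff:
  assumes "finite E"
  shows "objective E c z - objective E c u = -2 * (\<Sum>j\<in>flips E u z. c j * signs u j)"
proof -
  have "objective E c z - objective E c u
      = (\<Sum>j\<in>E. if signs u j \<noteq> signs z j then -2 * (c j * signs u j) else 0)"
    unfolding objective_def sum_subtractf[symmetric]
    by (rule sum.cong) (auto simp: signs_def)
  also have "\<dots> = (\<Sum>j\<in>flips E u z. -2 * (c j * signs u j))"
    unfolding flips_def by (rule sum.inter_filter[OF assms, symmetric])
  finally show ?thesis
    by (simp add: sum_distrib_left)
qed

lemma objective_diff_le:
  assumes "finite E"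
  shows "objective E c z - objective E c u \<le> 2 * (\<Sum>j\<in>flips E u z. \<bar>c j\<bar>)"
proof -
  have "- (c j * signs u j) \<le> \<bar>c j\<bar>" for j
    using signs_cases[of u j] by auto
  then have "- (\<Sum>j\<in>flips E u z. c j * signs u j) \<le> (\<Sum>j\<in>flips E u z. \<bar>c j\<bar>)"
    by (simp add: sum_negf[symmetric] sum_mono)
  then show ?thesis
    using objective_diff[OF assms] by simp
qed

definition weight :: "'a selt set \<Rightarrow> 'a \<Rightarrow> real" where
  "weight S j = (if Pl j \<in> S then 1 else if Br j \<in> S then -1 else 0)"

lemma abs_weight_le: "\<bar>weight S j\<bar> \<le> 1"
  by (simp add: weight_def)

lemma weight_eq_0: "j \<notin> index ` S \<Longrightarrow> weight S j = 0"
  by (auto simp: weight_def dest: index_image_memI)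

lemma weight_Un:
  assumes "index ` S \<inter> index ` T = {}"
  shows "weight (S \<union> T) j = weight S j + weight T j"
  using assms index_image_memI[of j S] index_image_memI[of j T] by (auto simp: weight_def)

lemma objective_weight_single:
  assumes "finite E" and "transversal E z" and "index a \<in> E"
  shows "objective E (weight {a}) z = (if a \<in> z then 1 else -1)"
proof -
  have "objective E (weight {a}) z
      = (\<Sum>j\<in>E. if j = index a then weight {a} (index a) * signs z (index a) else 0)"
    unfolding objective_def by (rule sum.cong) (auto simp: weight_eq_0)
  also have "\<dots> = weight {a} (index a) * signs z (index a)"
    using assms(1,3) by simp
  finally show ?thesis
    using assms(2,3) by (cases a) (auto simp: weight_def signs_def transversal_def)
qed

definition maximizers :: "'a set \<Rightarrow> ('a \<Rightarrow> real) \<Rightarrow> 'a selt set set \<Rightarrow> 'a selt set set" where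
  "maximizers E c M = {z\<in>M. \<forall>z'\<in>M. objective E c z' \<le> objective E c z}"

definition optimum :: "'a set \<Rightarrow> ('a \<Rightarrow> real) \<Rightarrow> 'a selt set set \<Rightarrow> real" where
  "optimum E c M = Max (objective E c ` M)"

lemma maximizers_subset: "maximizers E c M \<subseteq> M"
  by (auto simp: maximizers_def)

lemma maximizers_nonempty:
  assumes "finite M" and "M \<noteq> {}"
  shows "maximizers E c M \<noteq> {}"
proof -
  have "Max (objective E c ` M) \<in> objective E c ` M"
    using assms by (intro Max_in) auto
  then obtain z where "z \<in> M" "objective E c z = Max (objective E c ` M)"
    by auto
  then have "z \<in> maximizers E c M"
    using assms(1) by (auto simp: maximizers_def)
  then show ?thesis
    by blast
qed

lemma optimum_eq_objective:
  assumes "finite M" and "z \<in> maximizers E c M"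
  shows "optimum E c M = objective E c z"
  using assms unfolding maximizers_def optimum_def by (intro Max_eqI) auto

lemma maximizers_objective_eq:
  assumes "u \<in> maximizers E c M" and "w \<in> maximizers E c M"
  shows "objective E c w = objective E c u"
proof -
  have "objective E c w \<le> objective E c u" and "objective E c u \<le> objective E c w"
    using assms by (auto simp: maximizers_def)
  then show ?thesis
    by (rule order.antisym)
qed

lemma maximizers_eq_pair:
  assumes "u \<in> M" and "w \<in> M" and "objective E c w = objective E c u"
    and "\<And>z. z \<in> M \<Longrightarrow> z \<noteq> u \<Longrightarrow> z \<noteq> w \<Longrightarrow> objective E c z < objective E c u"
  shows "maximizers E c M = {u, w}"
proof (intro set_eqI iffI)
  fix z
  assume "z \<in> maximizers E c M"
  then have "z \<in> M" and "objective E c u \<le> objective E c z"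
    using assms(1) by (auto simp: maximizers_def)
  then show "z \<in> {u, w}"
    by (metis assms(4) insertCI not_le)
next
  fix z
  assume "z \<in> {u, w}"
  moreover have "objective E c z' \<le> objective E c u" if "z' \<in> M" for z'
    using assms(3) assms(4)[OF that] by (cases "z' = u \<or> z' = w") auto
  ultimately show "z \<in> maximizers E c M"
    using assms(1-3) by (auto simp: maximizers_def)
qed

definition short_edges :: "'a set \<Rightarrow> 'a selt set set \<Rightarrow> bool" where
  "short_edges E M \<longleftrightarrow>
     (\<forall>c u w. u \<noteq> w \<longrightarrow> maximizers E c M = {u, w} \<longrightarrow> card (flips E u w) \<le> 2)"

section \<open>Delta-matroids have short edges\<close>

lemma card_support_edge_dir:
  assumes "v \<in> edge_dirs E"
  shows "card {k. v $ k \<noteq> 0} \<le> 2"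
proof -
  consider i where "v = axis i 1" | i j where "v = axis i 1 + axis j 1"
    | i j where "v = axis i 1 - axis j 1"
    using assms unfolding edge_dirs_def by blast
  then obtain i j where "{k. v $ k \<noteq> 0} \<subseteq> {i, j}"
  proof cases
    case (1 i)
    then show thesis
      by (intro that[of i i]) (auto simp: axis_def)
  next
    case (2 i j)
    then show thesis
      by (intro that[of i j]) (auto simp: axis_def)
  next
    case (3 i j)
    then show thesis
      by (intro that[of i j]) (auto simp: axis_def)
  qed
  then have "card {k. v $ k \<noteq> 0} \<le> card {i, j}"
    by (intro card_mono) auto
  also have "\<dots> \<le> 2"
    by (simp add: card_insert_le_m1)
  finally show ?thesis .
qed

lemma exposed_face_segment:
  fixes V :: "'n::euclidean_space set"
  assumes "finite V" and "p \<in> V" and "q \<in> V" and "p \<noteq> q"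
    and "\<forall>x\<in>V. c \<bullet> x \<le> c \<bullet> p" and "c \<bullet> q = c \<bullet> p"
    and "\<forall>x\<in>V. c \<bullet> x = c \<bullet> p \<longrightarrow> x = p \<or> x = q"
  defines "Ed \<equiv> convex hull V \<inter> {x. c \<bullet> x = c \<bullet> p}"
  shows "Ed face_of convex hull V" and "aff_dim Ed = 1" and "p \<in> Ed" and "q \<in> Ed"
proof -
  have "convex hull V \<subseteq> {x. c \<bullet> x \<le> c \<bullet> p}"
    using assms(5) by (intro hull_minimal) (auto simp: convex_halfspace_le)
  then show face: "Ed face_of convex hull V"
    unfolding Ed_def by (intro face_of_Int_supporting_hyperplane_le) auto
  show p: "p \<in> Ed" and q: "q \<in> Ed"
    using assms(2,3,6) by (auto simp: Ed_def hull_inc)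
  obtain S where S: "S \<subseteq> V" "Ed = convex hull S"
    using face_of_convex_hull_subset[OF finite_imp_compact[OF assms(1)] face] by blast
  have "S \<subseteq> {p, q}"
    using S assms(7) hull_inc[of _ S] by (fastforce simp: Ed_def)
  then have "aff_dim Ed \<le> aff_dim {p, q}"
    using S(2) by (metis aff_dim_convex_hull aff_dim_subset)
  moreover have "aff_dim {p, q} \<le> aff_dim Ed"
    using p q by (intro aff_dim_subset) auto
  ultimately show "aff_dim Ed = 1"
    using assms(4) by simp
qed

lemma evec_nth: "evec a $ i = (if a = Pl i then 1 else 0) + (if a = Br i then -1 else 0)"
  by (cases a) (auto simp: axis_def)

lemma eset_nth:
  assumes "finite E" and "transversal E B"
  shows "eset B $ i = (if i \<in> E then signs B i else 0)"
proof -
  have fin: "finite B"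
    using assms finite_subset[of B "ground E"] by (simp add: transversal_def ground_def)
  have "eset B $ i = (\<Sum>a\<in>B. if a = Pl i then 1 else 0) + (\<Sum>a\<in>B. if a = Br i then -1 else 0)"
    unfolding eset_def sum_component by (simp add: evec_nth sum.distrib)
  also have "\<dots> = (if Pl i \<in> B then 1 else 0) + (if Br i \<in> B then -1 else 0)"
    using fin by simp
  finally show ?thesis
    using assms(2) by (auto simp: transversal_def signs_def ground_def)
qed

lemma objective_eq_inner:
  assumes "finite E" and "transversal E B"
  shows "objective E c B = (\<chi> j. if j \<in> E then c j else 0) \<bullet> eset B"
proof -
  have "(\<chi> j. if j \<in> E then c j else 0) \<bullet> eset B = (\<Sum>j\<in>UNIV. if j \<in> E then c j * signs B j else 0)"
    unfolding inner_vec_def by (rule sum.cong) (auto simp: eset_nth[OF assms])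
  then show ?thesis
    by (simp add: objective_def sum.inter_restrict[symmetric])
qed

lemma flips_eq_support_eset_diff:
  assumes "finite E" and "transversal E u" and "transversal E w"
  shows "flips E u w = {l. (eset w - eset u) $ l \<noteq> 0}"
  using eset_nth[OF assms(1,2)] eset_nth[OF assms(1,3)] by (auto simp: flips_def)

lemma delta_matroid_maximizers_pair_edge:
  fixes E :: "'a::finite set"
  assumes dm: "delta_matroid E F" and "u \<noteq> w" and max: "maximizers E c F = {u, w}"
  obtains v k where "v \<in> edge_dirs E" and "eset w - eset u = k *\<^sub>R v"
proof -
  have E: "finite E" by simp
  have trans: "transversal E B" if "B \<in> F" for B
    using delta_matroid_transversal[OF dm that] .
  define cv where "cv = (\<chi> j. if j \<in> E then c j else 0)"
  let ?Ed = "convex hull eset ` F \<inter> {x. cv \<bullet> x = cv \<bullet> eset u}"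
  have obj: "objective E c B = cv \<bullet> eset B" if "B \<in> F" for B
    unfolding cv_def by (rule objective_eq_inner[OF E trans[OF that]])
  have u: "u \<in> maximizers E c F" and w: "w \<in> maximizers E c F"
    using max by auto
  then have uF: "u \<in> F" and wF: "w \<in> F"
    using maximizers_subset by blast+
  have "flips E u w \<noteq> {}"
    using transversal_eqI[OF trans[OF uF] trans[OF wF]] \<open>u \<noteq> w\<close> by blast
  then have "eset u \<noteq> eset w"
    unfolding flips_eq_support_eset_diff[OF E trans[OF uF] trans[OF wF]] by auto
  moreover have "\<forall>x\<in>eset ` F. cv \<bullet> x \<le> cv \<bullet> eset u" and "cv \<bullet> eset w = cv \<bullet> eset u"
    using u uF wF maximizers_objective_eq[OF u w] by (auto simp: maximizers_def obj)
  moreover have "\<forall>x\<in>eset ` F. cv \<bullet> x = cv \<bullet> eset u \<longrightarrow> x = eset u \<or> x = eset w"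
  proof (intro ballI impI)
    fix x assume "x \<in> eset ` F" and "cv \<bullet> x = cv \<bullet> eset u"
    then obtain B where "B \<in> F" "x = eset B" "cv \<bullet> eset B = cv \<bullet> eset u"
      by blast
    then have "B \<in> maximizers E c F"
      using u uF by (auto simp: maximizers_def obj)
    then show "x = eset u \<or> x = eset w"
      using max \<open>x = eset B\<close> by auto
  qed
  moreover have "finite (eset ` F)"
    using finite_transversals[OF E] trans by blast
  ultimately have "?Ed face_of convex hull eset ` F" and "aff_dim ?Ed = 1"
    and "eset u \<in> ?Ed" and "eset w \<in> ?Ed"
    using exposed_face_segment[of "eset ` F" "eset u" "eset w" cv] uF wF by auto
  moreover obtain v where "v \<in> edge_dirs E" and "\<forall>x\<in>?Ed. \<forall>y\<in>?Ed. \<exists>k. y - x = k *\<^sub>R v"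
    using dm calculation(1,2) unfolding delta_matroid_def by blast
  ultimately show thesis
    using that by blast
qed

lemma delta_matroid_short_edges:
  fixes E :: "'a::finite set"
  assumes dm: "delta_matroid E F"
  shows "short_edges E F"
  unfolding short_edges_def
proof (intro allI impI)
  fix c u w
  assume "u \<noteq> w" and max: "maximizers E c F = {u, w}"
  obtain v k where v: "v \<in> edge_dirs E" and k: "eset w - eset u = k *\<^sub>R v"
    by (rule delta_matroid_maximizers_pair_edge[OF dm \<open>u \<noteq> w\<close> max])
  have "u \<in> maximizers E c F" and "w \<in> maximizers E c F"
    using max by simp_all
  then have tu: "transversal E u" and tw: "transversal E w"
    using delta_matroid_transversal[OF dm] subsetD[OF maximizers_subset] by blast+
  have "flips E u w = {l. (k *\<^sub>R v) $ l \<noteq> 0}"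
    using flips_eq_support_eset_diff[OF finite tu tw] k by simp
  then have "flips E u w \<subseteq> {l. v $ l \<noteq> 0}"
    by auto
  then have "card (flips E u w) \<le> card {l. v $ l \<noteq> 0}"
    by (rule card_mono[OF finite])
  with card_support_edge_dir[OF v] show "card (flips E u w) \<le> 2"
    by linarith
qed

section \<open>Local optimality\<close>

lemma ex_dominating_factor:
  fixes d e :: "'b \<Rightarrow> real"
  assumes "finite X" and "\<forall>x\<in>X. 0 < d x"
  shows "\<exists>K. \<forall>x\<in>X. e x < K * d x"
proof (intro exI ballI)
  fix x
  assume x: "x \<in> X"
  then have "e x / d x < Max ((\<lambda>x. e x / d x) ` X) + 1"
    using assms(1) by (simp add: add.commute add_strict_increasing)
  then show "e x < (Max ((\<lambda>x. e x / d x) ` X) + 1) * d x"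
    using assms(2) x by (simp add: divide_less_eq)
qed

lemma maximizers_restrict:
  assumes "u \<in> M'" and "M' \<subseteq> M"
    and below: "\<And>z. z \<in> M - M' \<Longrightarrow> objective E c z < objective E c u"
  shows "maximizers E c M = maximizers E c M'"
proof (intro set_eqI iffI)
  fix z
  assume z: "z \<in> maximizers E c M"
  then have "z \<in> M'"
    using assms(1,2) below[of z] by (force simp: maximizers_def)
  then show "z \<in> maximizers E c M'"
    using z assms(2) by (auto simp: maximizers_def)
next
  fix z
  assume z: "z \<in> maximizers E c M'"
  have "objective E c z' \<le> objective E c z" if "z' \<in> M" for z'
  proof (cases "z' \<in> M'")
    case True
    then show ?thesis
      using z by (simp add: maximizers_def)
  next
    case False
    then show ?thesis
      using below[of z'] that z assms(1) by (force simp: maximizers_def)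
  qed
  then show "z \<in> maximizers E c M"
    using z assms(2) by (auto simp: maximizers_def)
qed

lemma maximizers_add_const:
  assumes "\<And>z. z \<in> M \<Longrightarrow> objective E c' z = objective E c z + k"
  shows "maximizers E c' M = maximizers E c M"
  using assms by (auto simp: maximizers_def)

lemma ex_maximizers_lexicographic:
  assumes "finite M"
  shows "\<exists>K. maximizers E (\<lambda>j. c j + K * c0 j) M = maximizers E c (maximizers E c0 M)"
proof (cases "M = {}")
  case True
  then show ?thesis
    by (simp add: maximizers_def)
next
  case False
  let ?M' = "maximizers E c0 M"
  obtain u where u: "u \<in> ?M'"
    using maximizers_nonempty[OF assms False] by blast
  have gap: "objective E c0 z < objective E c0 u" if z: "z \<in> M - ?M'" for z
  proof -
    obtain z' where "z' \<in> M" and "objective E c0 z < objective E c0 z'"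
      using z by (auto simp: maximizers_def not_le)
    moreover have "objective E c0 z' \<le> objective E c0 u"
      using u \<open>z' \<in> M\<close> by (simp add: maximizers_def)
    ultimately show ?thesis
      by linarith
  qed
  have "\<exists>K. \<forall>z\<in>M - ?M'.
      objective E c z - objective E c u < K * (objective E c0 u - objective E c0 z)"
    by (rule ex_dominating_factor) (use assms gap in auto)
  then obtain K where K:
    "\<And>z. z \<in> M - ?M' \<Longrightarrow> objective E c z - objective E c u < K * (objective E c0 u - objective E c0 z)"
    by blast
  let ?c' = "\<lambda>j. c j + K * c0 j"
  have obj': "objective E ?c' z = objective E c z + K * objective E c0 z" for z
    unfolding objective_add objective_mult ..
  have "maximizers E ?c' M = maximizers E ?c' ?M'"
    by (rule maximizers_restrict[OF u maximizers_subset]) (use K in \<open>simp add: obj' algebra_simps\<close>)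
  also have "\<dots> = maximizers E c ?M'"
    by (rule maximizers_add_const[where k = "K * objective E c0 u"])
      (simp add: obj' maximizers_objective_eq[OF u])
  finally show ?thesis
    by blast
qed

lemma short_edges_maximizers:
  assumes "finite M" and "short_edges E M"
  shows "short_edges E (maximizers E c0 M)"
  unfolding short_edges_def
proof (intro allI impI)
  fix c u w
  assume "u \<noteq> w" and "maximizers E c (maximizers E c0 M) = {u, w}"
  then obtain K where "maximizers E (\<lambda>j. c j + K * c0 j) M = {u, w}"
    using ex_maximizers_lexicographic[OF assms(1), of E c c0] by auto
  then show "card (flips E u w) \<le> 2"
    using assms(2) \<open>u \<noteq> w\<close> by (simp add: short_edges_def)
qed

text \<open>Under isolating_weight E c u w, flipping a coordinate j away from u changes the objective
  by -2 times the bracket: outside X = flips E u w this exceeds the total weight of c, while on X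
  the change under c is lowered by equal shares of the gain of w over u, so that u and w tie.\<close>

definition isolating_weight :: "'a set \<Rightarrow> ('a \<Rightarrow> real) \<Rightarrow> 'a selt set \<Rightarrow> 'a selt set \<Rightarrow> 'a \<Rightarrow> real"
  where "isolating_weight E c u w j = signs u j *
    (if j \<in> flips E u w
     then c j * signs u j + (objective E c w - objective E c u) / (2 * card (flips E u w))
     else (\<Sum>k\<in>E. \<bar>c k\<bar>) + 1)"

lemma isolating_weight_mult_signs:
  "isolating_weight E c u w j * signs u j =
    (if j \<in> flips E u w
     then c j * signs u j + (objective E c w - objective E c u) / (2 * card (flips E u w))
     else (\<Sum>k\<in>E. \<bar>c k\<bar>) + 1)"
  by (simp add: isolating_weight_def signs_def)

lemma objective_isolating_weight_within:
  assumes E: "finite E" and "flips E u z \<subseteq> flips E u w"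
  shows "objective E (isolating_weight E c u w) z - objective E (isolating_weight E c u w) u
    = objective E c z - objective E c u
      - (objective E c w - objective E c u) * card (flips E u z) / card (flips E u w)"
proof -
  let ?\<Delta> = "objective E c w - objective E c u" and ?n = "card (flips E u w)"
  have "objective E (isolating_weight E c u w) z - objective E (isolating_weight E c u w) u
      = -2 * (\<Sum>j\<in>flips E u z. c j * signs u j + ?\<Delta> / (2 * ?n))"
    using objective_diff[OF E, of "isolating_weight E c u w" z u] assms(2)
    by (simp add: isolating_weight_mult_signs subset_iff)
  also have "\<dots> = objective E c z - objective E c u - ?\<Delta> * card (flips E u z) / ?n"
    using objective_diff[OF E, of c z u] by (simp add: sum.distrib)
  finally show ?thesis .
qed

lemma objective_isolating_weight_outside:
  assumes E: "finite E" and "objective E c u \<le> objective E c w"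
    and "\<not> flips E u z \<subseteq> flips E u w"
  shows "objective E (isolating_weight E c u w) z < objective E (isolating_weight E c u w) u"
proof -
  let ?H = "isolating_weight E c u w" and ?W = "\<Sum>k\<in>E. \<bar>c k\<bar>"
  obtain j0 where j0: "j0 \<in> flips E u z" "j0 \<notin> flips E u w"
    using assms(3) by blast
  have "- \<bar>c j\<bar> \<le> ?H j * signs u j" for j
  proof (cases "j \<in> flips E u w")
    case True
    have "- \<bar>c j\<bar> \<le> c j * signs u j"
      using signs_cases[of u j] by auto
    moreover have "0 \<le> (objective E c w - objective E c u) / (2 * card (flips E u w))"
      using assms(2) by simp
    ultimately show ?thesis
      using True by (simp add: isolating_weight_mult_signs)
  next
    case False
    have "0 \<le> ?W"
      by (simp add: sum_nonneg)
    then have "- \<bar>c j\<bar> \<le> ?W + 1"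
      using abs_ge_zero[of "c j"] by linarith
    then show ?thesis
      using False by (simp add: isolating_weight_mult_signs)
  qed
  then have "- (\<Sum>j\<in>flips E u z - {j0}. \<bar>c j\<bar>) \<le> (\<Sum>j\<in>flips E u z - {j0}. ?H j * signs u j)"
    by (simp add: sum_negf[symmetric] sum_mono)
  moreover have "(\<Sum>j\<in>flips E u z - {j0}. \<bar>c j\<bar>) \<le> ?W"
    by (rule sum_mono2[OF E]) (auto simp: flips_def)
  moreover have "(\<Sum>j\<in>flips E u z. ?H j * signs u j)
      = ?H j0 * signs u j0 + (\<Sum>j\<in>flips E u z - {j0}. ?H j * signs u j)"
    by (rule sum.remove[OF finite_flips[OF E] j0(1)])
  ultimately have "0 < (\<Sum>j\<in>flips E u z. ?H j * signs u j)"
    using j0(2) by (simp add: isolating_weight_mult_signs)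
  then show ?thesis
    using objective_diff[OF E, of ?H z u] by simp
qed

lemma maximizers_isolating_weight:
  assumes E: "finite E" and trans: "\<forall>B\<in>M. transversal E B"
    and u: "u \<in> M" and w: "w \<in> M" and better: "objective E c u < objective E c w"
    and minimal: "\<And>z. z \<in> M \<Longrightarrow> flips E u z \<subset> flips E u w \<Longrightarrow> objective E c z \<le> objective E c u"
  shows "maximizers E (isolating_weight E c u w) M = {u, w}"
proof (rule maximizers_eq_pair[OF u w])
  have "u \<noteq> w"
    using better by auto
  then have "flips E u w \<noteq> {}"
    using transversal_eqI trans u w by blast
  then have "0 < card (flips E u w)"
    using finite_flips[OF E] by (simp add: card_gt_0_iff)
  then show "objective E (isolating_weight E c u w) w = objective E (isolating_weight E c u w) u"
    using objective_isolating_weight_within[OF E subset_refl, where c = c and u = u and w = w]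
    by simp
next
  fix z
  assume z: "z \<in> M" "z \<noteq> u" "z \<noteq> w"
  show "objective E (isolating_weight E c u w) z < objective E (isolating_weight E c u w) u"
  proof (cases "flips E u z \<subseteq> flips E u w")
    case True
    have "flips E u z \<noteq> {}"
      using transversal_eqI trans u z by metis
    moreover have "flips E u z \<noteq> flips E u w"
      using flips_eq_imp_eq trans u w z by metis
    ultimately have "objective E c z \<le> objective E c u" and "0 < card (flips E u z)"
      using True minimal[OF z(1)] finite_flips[OF E] by (auto simp: card_gt_0_iff)
    moreover have "card (flips E u z) \<le> card (flips E u w)"
      by (rule card_mono[OF finite_flips[OF E] True])
    ultimately have "0 < (objective E c w - objective E c u)
        * real (card (flips E u z)) / real (card (flips E u w))"
      using better by (intro divide_pos_pos mult_pos_pos) simp_all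
    then show ?thesis
      using objective_isolating_weight_within[OF E True, where c = c]
        \<open>objective E c z \<le> objective E c u\<close> by linarith
  next
    case False
    show ?thesis
      by (rule objective_isolating_weight_outside[OF E less_imp_le[OF better] False])
  qed
qed

lemma ex_improvement_two_flips:
  assumes E: "finite E" and trans: "\<forall>B\<in>M. transversal E B" and short: "short_edges E M"
    and u: "u \<in> M" and "w0 \<in> M" and "objective E c u < objective E c w0"
  shows "\<exists>w\<in>M. objective E c u < objective E c w \<and> card (flips E u w) \<le> 2"
proof -
  obtain w where w: "w \<in> M" "objective E c u < objective E c w"
    and least: "\<And>z. z \<in> M \<Longrightarrow> objective E c u < objective E c z
                  \<Longrightarrow> card (flips E u w) \<le> card (flips E u z)"
    using ex_has_least_nat[of "\<lambda>z. z \<in> M \<and> objective E c u < objective E c z" w0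
        "\<lambda>z. card (flips E u z)"] assms(5,6) by blast
  have "objective E c z \<le> objective E c u" if "z \<in> M" "flips E u z \<subset> flips E u w" for z
    using least[OF that(1)] psubset_card_mono[OF finite_flips[OF E] that(2)] by fastforce
  then have "maximizers E (isolating_weight E c u w) M = {u, w}"
    using maximizers_isolating_weight[OF E trans u w] by blast
  moreover have "u \<noteq> w"
    using w(2) by auto
  ultimately have "card (flips E u w) \<le> 2"
    using short by (simp add: short_edges_def)
  with w show ?thesis
    by blast
qed

section \<open>Faces of a coordinate and minors\<close>

definition max_face :: "'a set \<Rightarrow> 'a selt set set \<Rightarrow> 'a selt \<Rightarrow> 'a selt set set" where
  "max_face E M a = maximizers E (weight {a}) M"

lemma max_face_eq:
  assumes "finite E" and "\<forall>B\<in>M. transversal E B" and "index a \<in> E"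
  shows "max_face E M a = (if \<exists>B\<in>M. a \<in> B then {B\<in>M. a \<in> B} else M)"
proof -
  have val: "objective E (weight {a}) B = (if a \<in> B then 1 else -1)" if "B \<in> M" for B
    by (rule objective_weight_single[OF assms(1) bspec[OF assms(2) that] assms(3)])
  show ?thesis
  proof (cases "\<exists>B\<in>M. a \<in> B")
    case True
    then obtain B0 where B0: "B0 \<in> M" "a \<in> B0"
      by blast
    have "z \<in> maximizers E (weight {a}) M \<longleftrightarrow> z \<in> M \<and> a \<in> z" for z
    proof
      assume "z \<in> maximizers E (weight {a}) M"
      then have "z \<in> M" and "objective E (weight {a}) B0 \<le> objective E (weight {a}) z"
        using B0(1) by (auto simp: maximizers_def)
      then show "z \<in> M \<and> a \<in> z"
        using val[OF B0(1)] val[of z] B0(2) by (simp split: if_splits)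
    next
      assume z: "z \<in> M \<and> a \<in> z"
      have "objective E (weight {a}) z' \<le> objective E (weight {a}) z" if "z' \<in> M" for z'
        using val[OF that] val[of z] z by simp
      then show "z \<in> maximizers E (weight {a}) M"
        using z by (simp add: maximizers_def)
    qed
    then show ?thesis
      using True by (auto simp: max_face_def)
  next
    case False
    then have "objective E (weight {a}) z = -1" if "z \<in> M" for z
      using val[OF that] that by auto
    then show ?thesis
      using False by (auto simp: max_face_def maximizers_def)
  qed
qed

lemma objective_diff_le_card_flips:
  assumes E: "finite E" and i: "i \<in> flips E y w" and "s i = 0" and "\<And>j. \<bar>s j\<bar> \<le> 1"
  shows "objective E s w - objective E s y \<le> 2 * (real (card (flips E y w)) - 1)"
proof -
  have "(\<Sum>j\<in>flips E y w. \<bar>s j\<bar>) = (\<Sum>j\<in>flips E y w - {i}. \<bar>s j\<bar>)"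
    using sum.remove[OF finite_flips[OF E] i, of "\<lambda>j. \<bar>s j\<bar>"] assms(3) by simp
  also have "\<dots> \<le> real (card (flips E y w - {i}))"
    using assms(4) sum_mono[of _ "\<lambda>j. \<bar>s j\<bar>" "\<lambda>_. 1"] by fastforce
  also have "\<dots> = real (card (flips E y w)) - 1"
    using card.remove[OF finite_flips[OF E] i] by simp
  finally show ?thesis
    using objective_diff_le[OF E, of s w y] by simp
qed

text \<open>If y maximizes s on the face, an improvement of s + e_a at y within two flips either
  stays on the face, or leaves it by flipping index a (losing 2) and at most one other
  coordinate (gaining at most 2 for s).\<close>

lemma maximizers_max_face_subset:
  assumes E: "finite E" and trans: "\<forall>B\<in>M. transversal E B"
    and short: "short_edges E M" and a: "index a \<in> E"
    and s0: "s (index a) = 0" and s1: "\<And>j. \<bar>s j\<bar> \<le> 1"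
  shows "maximizers E s (max_face E M a) \<subseteq> maximizers E (\<lambda>j. s j + weight {a} j) M"
proof
  fix y
  assume y: "y \<in> maximizers E s (max_face E M a)"
  let ?M' = "max_face E M a" and ?f = "\<lambda>j. s j + weight {a} j"
  have yM': "y \<in> ?M'" and yM: "y \<in> M"
    using y by (simp_all add: max_face_def maximizers_def)
  have val: "objective E (weight {a}) z = (if a \<in> z then 1 else -1)" if "z \<in> M" for z
    by (rule objective_weight_single[OF E bspec[OF trans that] a])
  have "objective E ?f x \<le> objective E ?f y" if x: "x \<in> M" for x
  proof (rule ccontr)
    assume "\<not> objective E ?f x \<le> objective E ?f y"
    then obtain w where w: "w \<in> M" "objective E ?f y < objective E ?f w" "card (flips E y w) \<le> 2"
      using ex_improvement_two_flips[OF E trans short yM x, of ?f] by auto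
    show False
    proof (cases "a \<in> w \<longleftrightarrow> a \<in> y")
      case True
      then have "w \<in> ?M'"
        using yM' w(1) val[OF w(1)] val[OF yM] by (simp add: max_face_def maximizers_def)
      then have "objective E s w \<le> objective E s y"
        using y by (simp add: maximizers_def)
      then show False
        using w(2) True val[OF w(1)] val[OF yM] by (simp add: objective_add)
    next
      case False
      then have "a \<in> y" and "a \<notin> w"
        using yM' w(1) val[OF w(1)] val[OF yM] by (auto simp: max_face_def maximizers_def)
      then have "index a \<in> flips E y w"
        using index_mem_flips trans yM w(1) a by blast
      then have "objective E s w - objective E s y \<le> 2"
        using objective_diff_le_card_flips[where s = s, OF E _ s0 s1] w(3) by fastforce
      then show False
        using w(2) \<open>a \<in> y\<close> \<open>a \<notin> w\<close> val[OF w(1)] val[OF yM] by (simp add: objective_add)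
    qed
  qed
  then show "y \<in> maximizers E ?f M"
    using yM by (simp add: maximizers_def)
qed

lemma optimum_max_face:
  assumes E: "finite E" and trans: "\<forall>B\<in>M. transversal E B" and "M \<noteq> {}"
    and short: "short_edges E M" and a: "index a \<in> E"
    and s0: "s (index a) = 0" and s1: "\<And>j. \<bar>s j\<bar> \<le> 1"
  shows "optimum E s (max_face E M a)
    = optimum E (\<lambda>j. s j + weight {a} j) M - optimum E (weight {a}) M"
proof -
  let ?M' = "max_face E M a" and ?f = "\<lambda>j. s j + weight {a} j"
  have finM: "finite M"
    using finite_transversals[OF E trans] .
  have finM': "finite ?M'"
    using finite_subset[OF maximizers_subset finM] unfolding max_face_def .
  have "?M' \<noteq> {}"
    unfolding max_face_def by (rule maximizers_nonempty[OF finM \<open>M \<noteq> {}\<close>])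
  then obtain y where y: "y \<in> maximizers E s ?M'"
    using maximizers_nonempty[OF finM'] by blast
  then have "y \<in> maximizers E ?f M"
    using maximizers_max_face_subset[where s = s, OF E trans short a s0 s1] by blast
  then have "optimum E ?f M = objective E ?f y"
    by (rule optimum_eq_objective[OF finM])
  also have "\<dots> = objective E s y + objective E (weight {a}) y"
    by (rule objective_add)
  also have "objective E s y = optimum E s ?M'"
    using optimum_eq_objective[OF finM' y] ..
  also have "objective E (weight {a}) y = optimum E (weight {a}) M"
  proof -
    have "y \<in> maximizers E (weight {a}) M"
      using y maximizers_subset unfolding max_face_def by blast
    then show ?thesis
      by (rule optimum_eq_objective[OF finM, symmetric])
  qed
  finally show ?thesis
    by simp
qed

lemma foldl_max_face_subset: "foldl (max_face E) M ts \<subseteq> M"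
proof (induction ts arbitrary: M)
  case (Cons a ts)
  then show ?case
    using maximizers_subset unfolding max_face_def by fastforce
qed simp

lemma foldl_max_face_nonempty:
  assumes "finite E" and "\<forall>B\<in>M. transversal E B" and "M \<noteq> {}"
  shows "foldl (max_face E) M ts \<noteq> {}"
  using assms(2,3)
proof (induction ts arbitrary: M)
  case (Cons a ts)
  have "max_face E M a \<noteq> {}"
    using maximizers_nonempty[OF finite_transversals[OF assms(1) Cons.prems(1)] Cons.prems(2)]
    by (simp add: max_face_def)
  moreover have "\<forall>B\<in>max_face E M a. transversal E B"
    using Cons.prems(1) maximizers_subset unfolding max_face_def by blast
  ultimately show ?case
    using Cons.IH by simp
qed simp

lemma optimum_foldl_max_face:
  assumes E: "finite E" and "\<forall>B\<in>M. transversal E B" and "M \<noteq> {}" and "short_edges E M"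
    and "distinct (map index ts)" and "index ` set ts \<subseteq> E" and "index ` S \<inter> index ` set ts = {}"
  shows "optimum E (weight S) (foldl (max_face E) M ts)
    = optimum E (weight (S \<union> set ts)) M - optimum E (weight (set ts)) M"
  using assms(2-)
proof (induction ts arbitrary: M)
  case Nil
  have "objective E (weight {}) z = 0" for z
    by (simp add: objective_def weight_def)
  then show ?case
    using Nil.prems(2) by (simp add: optimum_def image_constant_conv)
next
  case (Cons a ts)
  let ?M' = "max_face E M a"
  have trans': "\<forall>B\<in>?M'. transversal E B"
    using Cons.prems(1) maximizers_subset unfolding max_face_def by blast
  have "?M' \<noteq> {}"
    using foldl_max_face_nonempty[OF E Cons.prems(1,2), of "[a]"] by simp
  moreover have "short_edges E ?M'"
    unfolding max_face_def
    by (rule short_edges_maximizers[OF finite_transversals[OF E Cons.prems(1)] Cons.prems(3)])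
  ultimately have IH: "optimum E (weight S) (foldl (max_face E) ?M' ts)
      = optimum E (weight (S \<union> set ts)) ?M' - optimum E (weight (set ts)) ?M'"
    using Cons.IH[OF trans'] Cons.prems(4-6) by auto
  have step: "optimum E (weight T) ?M'
      = optimum E (weight (insert a T)) M - optimum E (weight {a}) M"
    if "index a \<notin> index ` T" for T
  proof -
    have "optimum E (weight T) ?M'
        = optimum E (\<lambda>j. weight T j + weight {a} j) M - optimum E (weight {a}) M"
      by (rule optimum_max_face[OF E Cons.prems(1-3)])
        (use Cons.prems(5) that weight_eq_0 abs_weight_le in auto)
    also have "(\<lambda>j. weight T j + weight {a} j) = weight (insert a T)"
      using weight_Un[of T "{a}"] that by (auto simp: fun_eq_iff)
    finally show ?thesis .
  qed
  have "index a \<notin> index ` (S \<union> set ts)" and "index a \<notin> index ` set ts"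
    using Cons.prems(4,6) by auto
  then show ?case
    using IH step by simp
qed

definition minor1 :: "'a selt set set \<Rightarrow> 'a selt \<Rightarrow> 'a selt set set" where
  "minor1 F a = (if \<exists>B\<in>F. a \<in> B then (\<lambda>B. B - {a}) ` {B\<in>F. a \<in> B} else proj F (index a))"

lemma contract1_eq_minor1: "contract1 = (\<lambda>F i. minor1 F (Pl i))"
  by (simp add: fun_eq_iff contract1_def minor1_def)

lemma delete1_eq_minor1: "delete1 = (\<lambda>F i. minor1 F (Br i))"
  by (simp add: fun_eq_iff delete1_def minor1_def)

lemma minor1_forget:
  assumes E: "finite E" and trans: "\<forall>B\<in>M. transversal E B" and a: "index a \<in> E" "index a \<notin> R"
  shows "minor1 ((\<lambda>B. B - ground R) ` M) a
    = (\<lambda>B. B - ground (insert (index a) R)) ` max_face E M a"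
proof -
  have mem: "a \<in> B - ground R \<longleftrightarrow> a \<in> B" for B
    using a(2) by (simp add: mem_ground_iff)
  show ?thesis
  proof (cases "\<exists>B\<in>M. a \<in> B")
    case True
    have "B - ground R - {a} = B - ground (insert (index a) R)" if "B \<in> M" "a \<in> B" for B
      using transversal_bar_iff[OF bspec[OF trans that(1)] a(1)] that(2)
      by (auto simp: ground_insert_index)
    then have "(\<lambda>B. B - ground R - {a}) ` {B\<in>M. a \<in> B}
        = (\<lambda>B. B - ground (insert (index a) R)) ` {B\<in>M. a \<in> B}"
      by (intro image_cong) auto
    moreover have "{B' \<in> (\<lambda>B. B - ground R) ` M. a \<in> B'} = (\<lambda>B. B - ground R) ` {B\<in>M. a \<in> B}"
      using mem by auto
    ultimately have "(\<lambda>B. B - {a}) ` {B' \<in> (\<lambda>B. B - ground R) ` M. a \<in> B'}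
        = (\<lambda>B. B - ground (insert (index a) R)) ` {B\<in>M. a \<in> B}"
      by (simp add: image_image)
    then show ?thesis
      using True mem by (simp add: minor1_def max_face_eq[OF E trans a(1)])
  next
    case False
    have "proj ((\<lambda>B. B - ground R) ` M) (index a) = (\<lambda>B. B - ground (insert (index a) R)) ` M"
      unfolding proj_def image_image
      by (rule image_cong[OF refl]) (cases a; auto simp: ground_insert)
    then show ?thesis
      using False mem by (simp add: minor1_def max_face_eq[OF E trans a(1)])
  qed
qed

lemma foldl_minor1_forget:
  assumes "finite E" and "\<forall>B\<in>M. transversal E B"
    and "distinct (map index ts)" and "index ` set ts \<subseteq> E" and "index ` set ts \<inter> R = {}"
  shows "foldl minor1 ((\<lambda>B. B - ground R) ` M) ts
    = (\<lambda>B. B - ground (R \<union> index ` set ts)) ` foldl (max_face E) M ts"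
  using assms(2-)
proof (induction ts arbitrary: M R)
  case (Cons a ts)
  have "\<forall>B\<in>max_face E M a. transversal E B"
    using Cons.prems(1) maximizers_subset unfolding max_face_def by blast
  then have "foldl minor1 ((\<lambda>B. B - ground (insert (index a) R)) ` max_face E M a) ts
      = (\<lambda>B. B - ground (insert (index a) R \<union> index ` set ts)) ` foldl (max_face E) (max_face E M a) ts"
    using Cons.IH Cons.prems(2-4) by auto
  then show ?case
    using minor1_forget[OF assms(1) Cons.prems(1)] Cons.prems(3,4) by simp
qed simp

lemma delete_contract_eq_foldl_minor1:
  assumes "finite A" and "finite B" and "A \<inter> B = {}"
  obtains ts where "distinct (map index ts)" and "set ts = Pl ` A \<union> Br ` B"
    and "delete (contract F A) B = foldl minor1 F ts"
proof -
  define xs where "xs = (SOME xs. set xs = A \<and> distinct xs)"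
  define ys where "ys = (SOME ys. set ys = B \<and> distinct ys)"
  have xs: "set xs = A \<and> distinct xs"
    unfolding xs_def by (rule someI_ex) (rule finite_distinct_list[OF assms(1)])
  have ys: "set ys = B \<and> distinct ys"
    unfolding ys_def by (rule someI_ex) (rule finite_distinct_list[OF assms(2)])
  show thesis
  proof (rule that[of "map Pl xs @ map Br ys"])
    show "distinct (map index (map Pl xs @ map Br ys))"
      using xs ys assms(3) by (simp add: comp_def)
    show "set (map Pl xs @ map Br ys) = Pl ` A \<union> Br ` B"
      using xs ys by simp
    show "delete (contract F A) B = foldl minor1 F (map Pl xs @ map Br ys)"
      unfolding delete_def contract_def xs_def[symmetric] ys_def[symmetric]
      by (simp add: foldl_map contract1_eq_minor1 delete1_eq_minor1)
  qed
qed

lemma rank_fn_forget: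
  assumes "S \<inter> ground R = {}"
  shows "rank_fn ((\<lambda>B. B - ground R) ` M) S = rank_fn M S"
proof -
  have "bar ` S \<inter> ground R = {}"
    using assms by (auto simp: mem_ground_iff)
  then have "S \<inter> (B - ground R) = S \<inter> B" and "bar ` S \<inter> (B - ground R) = bar ` S \<inter> B" for B
    using assms by blast+
  then show ?thesis
    unfolding rank_fn_def image_image by simp
qed

lemma card_inter_diff_eq_objective:
  assumes E: "finite E" and S: "admissible E S" and B: "transversal E B"
  shows "real (card (S \<inter> B)) - real (card (bar ` S \<inter> B)) = objective E (weight S) B"
proof -
  have finS: "finite S"
    using S E finite_subset[of S "ground E"] by (simp add: admissible_def ground_def)
  have idx: "index ` S \<subseteq> E"
    using S by (auto simp: admissible_def mem_ground_iff)
  have "bar ` S \<inter> B = bar ` {a\<in>S. bar a \<in> B}"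
    by (auto simp: image_iff)
  moreover have "inj bar"
    by (rule injI) (metis bar.simps(1,2) bar.elims)
  ultimately have "card (bar ` S \<inter> B) = card {a\<in>S. bar a \<in> B}"
    using card_image[OF inj_on_subset[OF \<open>inj bar\<close> subset_UNIV]] by simp
  moreover have "S \<inter> B = {a\<in>S. a \<in> B}"
    by blast
  ultimately have "real (card (S \<inter> B)) - real (card (bar ` S \<inter> B))
      = (\<Sum>a\<in>S. if a \<in> B then 1 else 0) - (\<Sum>a\<in>S. if bar a \<in> B then 1 else 0)"
    using finS by (simp add: sum.If_cases Int_def)
  also have "\<dots> = (\<Sum>a\<in>S. weight S (index a) * signs B (index a))"
    unfolding sum_subtractf[symmetric]
  proof (rule sum.cong[OF refl])
    fix a
    assume "a \<in> S"
    then show "(if a \<in> B then 1 else 0) - (if bar a \<in> B then 1 else 0)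
        = weight S (index a) * signs B (index a)"
      using S B idx transversal_bar_iff[OF B, of a]
      by (cases a) (auto simp: admissible_def weight_def signs_def)
  qed
  also have "\<dots> = (\<Sum>j\<in>index ` S. weight S j * signs B j)"
    by (rule sum.reindex[OF inj_on_index_admissible[OF S], symmetric, unfolded comp_def])
  also have "\<dots> = objective E (weight S) B"
    unfolding objective_def
    by (rule sum.mono_neutral_left[OF E idx]) (auto simp: weight_eq_0)
  finally show ?thesis .
qed

lemma rank_fn_eq_optimum:
  assumes "finite E" and "admissible E S" and "\<forall>B\<in>M. transversal E B" and "M \<noteq> {}"
  shows "real_of_int (rank_fn M S) = optimum E (weight S) M"
proof -
  have "real_of_int (rank_fn M S)
      = Max (real_of_int ` (\<lambda>B. int (card (S \<inter> B)) - int (card (bar ` S \<inter> B))) ` M)"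
    unfolding rank_fn_def
    by (rule mono_Max_commute) (use finite_transversals[OF assms(1,3)] assms(4) in \<open>auto simp: mono_def\<close>)
  also have "\<dots> = optimum E (weight S) M"
    unfolding optimum_def image_image
    using card_inter_diff_eq_objective[OF assms(1,2)] assms(3) by simp
  finally show ?thesis .
qed

lemma disjoint_ground_iff: "S \<inter> ground R = {} \<longleftrightarrow> index ` S \<inter> R = {}"
  by (auto simp: mem_ground_iff)

lemma admissible_set_distinct_index:
  assumes "distinct (map index ts)" and "set ts \<subseteq> ground E"
  shows "admissible E (set ts)"
proof -
  have inj: "inj_on index (set ts)"
    using assms(1) by (simp add: distinct_map)
  have "\<not> (Pl i \<in> set ts \<and> Br i \<in> set ts)" for i
    using inj_onD[OF inj, of "Pl i" "Br i"] by auto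
  then show ?thesis
    using assms(2) by (simp add: admissible_def)
qed

lemma admissible_Un:
  assumes "admissible E S" and "admissible E T" and "index ` S \<inter> index ` T = {}"
  shows "admissible E (S \<union> T)"
proof -
  have "\<not> (Pl i \<in> S \<and> Br i \<in> T)" and "\<not> (Br i \<in> S \<and> Pl i \<in> T)" for i
    using assms(3) index_image_memI[of i S] index_image_memI[of i T] by auto
  then show ?thesis
    using assms(1,2) by (auto simp: admissible_def)
qed

lemma rank_fn_foldl_max_face:
  assumes E: "finite E" and trans: "\<forall>B\<in>M. transversal E B" and "M \<noteq> {}" and "short_edges E M"
    and ts: "distinct (map index ts)" "set ts \<subseteq> ground E"
    and S: "admissible E S" "index ` S \<inter> index ` set ts = {}"
  shows "rank_fn (foldl (max_face E) M ts) S = rank_fn M (S \<union> set ts) - rank_fn M (set ts)"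
proof -
  let ?M = "foldl (max_face E) M ts"
  have adm: "admissible E (set ts)"
    by (rule admissible_set_distinct_index[OF ts])
  have "index ` set ts \<subseteq> E"
    using ts(2) by (auto simp: mem_ground_iff)
  have "real_of_int (rank_fn ?M S) = optimum E (weight S) ?M"
  proof (rule rank_fn_eq_optimum[OF E S(1)])
    show "\<forall>X\<in>?M. transversal E X"
      using foldl_max_face_subset trans by blast
    show "?M \<noteq> {}"
      by (rule foldl_max_face_nonempty[OF E trans \<open>M \<noteq> {}\<close>])
  qed
  also have "\<dots> = optimum E (weight (S \<union> set ts)) M - optimum E (weight (set ts)) M"
    by (rule optimum_foldl_max_face[OF E trans \<open>M \<noteq> {}\<close> assms(4) ts(1) \<open>index ` set ts \<subseteq> E\<close> S(2)])
  also have "\<dots> = real_of_int (rank_fn M (S \<union> set ts) - rank_fn M (set ts))"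
    using rank_fn_eq_optimum[OF E _ trans \<open>M \<noteq> {}\<close>] adm admissible_Un[OF S(1) adm S(2)] by simp
  finally show ?thesis
    by (simp only: of_int_eq_iff)
qed

lemma delete_contract_eq_forget_foldl_max_face:
  assumes E: "finite E" and trans: "\<forall>X\<in>F. transversal E X"
    and "A \<subseteq> E" and "B \<subseteq> E" and "A \<inter> B = {}"
  obtains ts where "distinct (map index ts)" and "set ts = Pl ` A \<union> Br ` B"
    and "delete (contract F A) B = (\<lambda>X. X - ground (A \<union> B)) ` foldl (max_face E) F ts"
proof -
  obtain ts where ts: "distinct (map index ts)" "set ts = Pl ` A \<union> Br ` B"
    and minor: "delete (contract F A) B = foldl minor1 F ts"
    using delete_contract_eq_foldl_minor1[OF finite_subset[OF assms(3) E]
        finite_subset[OF assms(4) E] assms(5)] by blast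
  have idx: "index ` set ts = A \<union> B"
    unfolding ts(2) by (auto simp: image_Un image_image)
  have "(\<lambda>X. X - ground {}) ` F = F"
    by (simp add: ground_def)
  then have "delete (contract F A) B = (\<lambda>X. X - ground (A \<union> B)) ` foldl (max_face E) F ts"
    using minor foldl_minor1_forget[OF E trans ts(1), of "{}"] idx assms(3,4) by simp
  with ts show thesis
    by (rule that)
qed

theorem proposition2p3:
  fixes E :: "'a::finite set" and F :: "'a selt set set"
    and A B :: "'a set" and S :: "'a selt set"
  assumes "delta_matroid E F"
    and "A \<subseteq> E" and "B \<subseteq> E" and "A \<inter> B = {}"
    and "admissible E S"
    and "S \<inter> (Pl ` A \<union> Pl ` B \<union> Br ` A \<union> Br ` B) = {}"
  shows "rank_fn (delete (contract F A) B) S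
       = rank_fn F (S \<union> Pl ` A \<union> Br ` B) - rank_fn F (Pl ` A \<union> Br ` B)"
proof -
  let ?T = "Pl ` A \<union> Br ` B"
  have trans: "\<forall>X\<in>F. transversal E X" and "F \<noteq> {}"
    using delta_matroid_transversal[OF assms(1)] assms(1) by (auto simp: delta_matroid_def)
  obtain ts where ts: "distinct (map index ts)" "set ts = ?T"
    and minor: "delete (contract F A) B = (\<lambda>X. X - ground (A \<union> B)) ` foldl (max_face E) F ts"
    using delete_contract_eq_forget_foldl_max_face[OF finite trans assms(2-4)] by blast
  have "S \<inter> ground (A \<union> B) = {}"
    using assms(6) by (auto simp: ground_def)
  then have "rank_fn (delete (contract F A) B) S = rank_fn (foldl (max_face E) F ts) S"
    unfolding minor by (rule rank_fn_forget)
  also have "\<dots> = rank_fn F (S \<union> ?T) - rank_fn F ?T"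
  proof (rule rank_fn_foldl_max_face[OF finite trans \<open>F \<noteq> {}\<close> delta_matroid_short_edges[OF assms(1)]
        ts(1), unfolded ts(2)])
    show "?T \<subseteq> ground E"
      using assms(2,3) by (auto simp: ground_def)
    show "index ` S \<inter> index ` ?T = {}"
      using \<open>S \<inter> ground (A \<union> B) = {}\<close> by (simp add: disjoint_ground_iff image_Un image_image)
  qed (rule assms(5))
  finally show ?thesis
    unfolding Un_assoc .
qed

end
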